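(* Consider a single seller with one item and a single buyer ($n=1$), with the buyer's value drawn from an arbitrary distribution $F$ satisfying the standing assumptions. Then every point $(\Pi,U)$ on the Pareto frontier can be realized by a mechanism that fixes a probability $\lambda\in[0,1]$ ex ante, posts a take-it-or-leave-it price $p^\dagger$ with probability $\lambda$ and a take-it-or-leave-it price $p^\ddagger$ with probability $1-\lambda$, where both $p^\dagger$ and $p^\ddagger$ are at most the lowest monopoly reserve of $F$ (if the buyer accepts, she gets the item and pays the posted price to the seller).
   Context: Setting: one seller with a single item of zero cost and $n\ge 1$ buyers with quasi-linear utilities ($x\cdot v-p$ for allocation $x\in[0,1]$ and payment $p$); the buyers' values $v_1,\dots,v_n$ are i.i.d. from a publicly known distribution $F$ whose support is $[v_L,v_H]$ or $[v_L,\infty)$ with $v_L\ge 0$, which has no atoms except possibly at $v_H$, whose CDF $F(t)=\Pr[v<t]$ is differentiable on the interior of the support with density $f$, and such that some price $p$ in the support maximizes $p(1-F(p))$. $\mathfrak M$ is the set of direct mechanisms (allocation rules $x_i(\mathbf v)\in[0,1]$, payments $p_i(\mathbf v)\ge 0$, all payments transferred to the seller) that are ex-post feasible ($\sum_i x_i\le 1$), Bayesian incentive compatible, interim individually rational, and symmetric across buyers. For $M\in\mathfrak M$: seller revenue $\Pi_F(M)=\mathbb E[\sum_i p_i(\mathbf v)]$, buyer $i$'s ex-ante utility $U_{i,F}(M)=\mathbb E[x_i(\mathbf v)v_i-p_i(\mathbf v)]$, buyers' surplus $U_F(M)=\sum_i U_{i,F}(M)$. $M$ is Pareto-dominated by $M'$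 if $\Pi_F(M')\ge \Pi_F(M)$ and $U_F(M')\ge U_F(M)$ with at least one strict; $M$ is Pareto-optimal if no $M'\in\mathfrak M$ Pareto-dominates it, and then $(\Pi_F(M),U_F(M))$ is on the Pareto frontier. Quantile of value $v$ is $q=1-F(v)$; value function $v(q)=\inf\{v:F(v)>1-q\}$; revenue curve $R(q)=q\,v(q)$; $q_m=\sup\arg\max_q R(q)$ and the lowest monopoly reserve is $v(q_m)$. *)

theory Defs
  imports "HOL-Probability.Probability"
begin

text \<open>Single buyer (n = 1). The value distribution is a probability measure D on the
reals (Borel sets). A direct mechanism is a pair (x, p) of allocation and payment rules.\<close>

definition supp :: "real measure \<Rightarrow> real set" where
  "supp D = {v. \<forall>e>0. measure D (ball v e) > 0}"

definition cdf_lt :: "real measure \<Rightarrow> real \<Rightarrow> real" where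
  "cdf_lt D t = measure D {..<t}"

definition standing_assumptions :: "real measure \<Rightarrow> bool" where
  "standing_assumptions D \<longleftrightarrow>
     prob_space D \<and> sets D = sets borel \<and>
     (\<exists>vL\<ge>0.
        (\<exists>vH. vL \<le> vH \<and> supp D = {vL..vH} \<and> (\<forall>v. v \<noteq> vH \<longrightarrow> measure D {v} = 0))
      \<or> (supp D = {vL..} \<and> (\<forall>v. measure D {v} = 0))) \<and>
     (\<forall>t\<in>interior (supp D). cdf_lt D differentiable (at t)) \<and>
     (\<exists>p\<in>supp D. \<forall>p'. p' * (1 - cdf_lt D p') \<le> p * (1 - cdf_lt D p))"

definition value_fn :: "real measure \<Rightarrow> real \<Rightarrow> real" where
  "value_fn D q = Inf {v. cdf_lt D v > 1 - q}"

definition rev_curve :: "real measure \<Rightarrow> real \<Rightarrow> real" where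
  "rev_curve D q = q * value_fn D q"

definition q_m :: "real measure \<Rightarrow> real" where
  "q_m D = Sup {q\<in>{0..1}. \<forall>q'\<in>{0..1}. rev_curve D q' \<le> rev_curve D q}"

definition lowest_monopoly_reserve :: "real measure \<Rightarrow> real" where
  "lowest_monopoly_reserve D = value_fn D (q_m D)"

type_synonym mech = "(real \<Rightarrow> real) \<times> (real \<Rightarrow> real)"

text \<open>The class of mechanisms: feasible, (Bayesian = ex post for n = 1) IC, IR, nonnegative
payments; symmetry is vacuous for a single buyer.\<close>
definition mechs :: "real measure \<Rightarrow> mech set" where
  "mechs D = {(x, p). x \<in> borel_measurable borel \<and> p \<in> borel_measurable borel \<and>
     (\<forall>v\<in>supp D. 0 \<le> x v \<and> x v \<le> 1 \<and> 0 \<le> p v \<and> x v * v - p v \<ge> 0) \<and>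
     (\<forall>v\<in>supp D. \<forall>w\<in>supp D. x v * v - p v \<ge> x w * v - p w)}"

text \<open>Revenue and buyer surplus (both nonnegative; extended reals to allow infinite surplus).\<close>
definition revenue :: "real measure \<Rightarrow> mech \<Rightarrow> ennreal" where
  "revenue D M = (\<integral>\<^sup>+ v. ennreal (snd M v) \<partial>D)"

definition surplus :: "real measure \<Rightarrow> mech \<Rightarrow> ennreal" where
  "surplus D M = (\<integral>\<^sup>+ v. ennreal (fst M v * v - snd M v) \<partial>D)"

definition pareto_dominated :: "real measure \<Rightarrow> mech \<Rightarrow> mech \<Rightarrow> bool" where
  "pareto_dominated D M M' \<longleftrightarrow>
     revenue D M' \<ge> revenue D M \<and> surplus D M' \<ge> surplus D M \<and>
     (revenue D M' > revenue D M \<or> surplus D M' > surplus D M)"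

definition pareto_optimal :: "real measure \<Rightarrow> mech \<Rightarrow> bool" where
  "pareto_optimal D M \<longleftrightarrow> M \<in> mechs D \<and> \<not> (\<exists>M'\<in>mechs D. pareto_dominated D M M')"

definition lottery_pricing :: "real \<Rightarrow> real \<Rightarrow> real \<Rightarrow> mech" where
  "lottery_pricing lam p1 p2 =
     (\<lambda>v. lam * (if p1 \<le> v then 1 else 0) + (1 - lam) * (if p2 \<le> v then 1 else 0),
      \<lambda>v. lam * (if p1 \<le> v then p1 else 0) + (1 - lam) * (if p2 \<le> v then p2 else 0))"

end

theory Submission
  imports Defs
begin

(* The payment identity writes an incentive compatible mechanism as a random posted price: the
   quantile s of the allocation is sold at its threshold price, so revenue and buyer surplus are
   averages over s in [0, 1] of the revenue and surplus of posted prices.  Capping every price at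
   the lowest monopoly reserve r raises both averages, since r maximises posted-price revenue and
   surplus decreases in the price.  If the mean value is infinite, the posted price r has infinite
   surplus and already dominates.  Otherwise the achievable (revenue, surplus) pairs form a convex
   set, so a Pareto optimal point has a supporting line with nonnegative normal.  The points of
   the capped posted prices lie below that line while their average lies above it; hence almost
   all of them lie on it, and the average is a convex combination of two of them. *)

section \<open>Value distributions and the monopoly reserve\<close>

lemma real_distribution_if_standing_assumptions:
  "standing_assumptions D \<Longrightarrow> real_distribution D"
  unfolding standing_assumptions_def
  by (auto intro: real_distribution.intro real_distribution_axioms.intro)

lemma supp_interval_if_standing_assumptions:
  assumes "standing_assumptions D"
  obtains vL where "0 \<le> vL" "vL \<in> supp D" "supp D \<subseteq> {vL..}" "is_interval (supp D)"
proof -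
  obtain vL where "0 \<le> vL" and "(\<exists>vH. vL \<le> vH \<and> supp D = {vL..vH}) \<or> supp D = {vL..}"
    using assms unfolding standing_assumptions_def by blast
  then show ?thesis
    using that[of vL] by (auto simp: is_interval_cc is_interval_ci)
qed

definition rev_curve_argmax :: "real measure \<Rightarrow> real set" where
  "rev_curve_argmax D = {q \<in> {0..1}. \<forall>q'\<in>{0..1}. rev_curve D q' \<le> rev_curve D q}"

lemma q_m_eq_Sup: "q_m D = Sup (rev_curve_argmax D)"
  unfolding q_m_def rev_curve_argmax_def ..

lemma bdd_above_rev_curve_argmax: "bdd_above (rev_curve_argmax D)"
  by (rule bdd_aboveI[of _ 1]) (simp add: rev_curve_argmax_def)

context real_distribution
begin

lemma AE_in_supp: "AE v in M. v \<in> supp M"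
proof -
  define B where "B = {ball v e | v e. 0 < e \<and> emeasure M (ball v e) = 0}"
  obtain C where C: "C \<subseteq> B" "countable C" "\<Union>C = \<Union>B"
    using Lindelof[of B] by (auto simp: B_def)
  have "N \<in> null_sets M" if "N \<in> C" for N
    using subsetD[OF C(1) that] by (auto simp: B_def)
  then have "\<Union>C \<in> null_sets M"
    using null_sets_UN'[of C "\<lambda>N. N"] C(2) by simp
  moreover have "- supp M \<subseteq> \<Union>C"
  proof
    fix v assume "v \<in> - supp M"
    then obtain e where "0 < e" "measure M (ball v e) = 0"
      unfolding supp_def by (auto simp: not_less measure_le_0_iff)
    then have "ball v e \<in> B"
      by (auto simp: B_def emeasure_eq_measure)
    then show "v \<in> \<Union>C"
      using C(3) \<open>0 < e\<close> by (metis UnionI centre_in_ball)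
  qed
  ultimately show ?thesis
    by (auto intro: AE_I')
qed

lemma measure_atLeast_eq: "measure M {t..} = 1 - cdf_lt M t"
  using prob_compl[of "{t..}"] by (simp add: cdf_lt_def Compl_eq_Diff_UNIV[symmetric] Compl_atLeast)

lemma measure_greaterThan_eq: "measure M {t<..} = 1 - cdf M t"
  using prob_compl[of "{..t}"] by (simp add: cdf_def Compl_eq_Diff_UNIV[symmetric] Compl_atMost)

lemma measure_atLeast_antimono: "s \<le> t \<Longrightarrow> measure M {t..} \<le> measure M {s..}"
  by (intro finite_measure_mono) auto

lemma le_measure_atLeast_if_le_below:
  assumes "\<And>v. v < r \<Longrightarrow> q \<le> measure M {v..}"
  shows "q \<le> measure M {r..}"
proof -
  have "cdf M v \<le> 1 - q" if "v < r" for v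
  proof -
    have "q \<le> measure M {(v + r) / 2..}"
      using assms that by simp
    also have "\<dots> \<le> measure M {v<..}"
      using that by (intro finite_measure_mono) auto
    finally show ?thesis
      by (simp add: measure_greaterThan_eq)
  qed
  then have "measure M {..<r} \<le> 1 - q"
    by (intro tendsto_upperbound[OF cdf_at_left])
      (auto intro: eventually_mono[OF eventually_at_left_real[of "r - 1"]])
  then show ?thesis
    using measure_atLeast_eq[of r] by (simp add: cdf_lt_def)
qed

lemma ex_measure_atLeast_less:
  assumes "0 < q"
  shows "\<exists>t. measure M {t..} < q"
proof -
  have "\<forall>\<^sub>F t in at_top. 1 - q < cdf M t"
    using cdf_lim_at_top_prob assms by (intro order_tendstoD) auto
  then obtain t where "1 - q < cdf M t"
    by (auto simp: eventually_at_top_linorder)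
  moreover have "measure M {t + 1..} \<le> measure M {t<..}"
    by (intro finite_measure_mono) auto
  ultimately show ?thesis
    by (intro exI[of _ "t + 1"]) (simp add: measure_greaterThan_eq)
qed

lemma measure_atLeast_nonpos:
  assumes "AE v in M. 0 \<le> v" "t \<le> 0"
  shows "measure M {t..} = 1"
proof (subst prob_eq_1)
  show "AE v in M. v \<in> {t..}"
    using assms(1) by eventually_elim (use assms(2) in auto)
qed auto

lemma value_fn_eq_Inf: "value_fn M q = Inf {v. measure M {v..} < q}"
  unfolding value_fn_def measure_atLeast_eq by (rule arg_cong[where f = Inf]) auto

context
  assumes nonneg: "AE v in M. 0 \<le> v"
begin

lemma measure_atLeast_less_imp_pos: "measure M {v..} < q \<Longrightarrow> q \<le> 1 \<Longrightarrow> 0 < v"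
  using measure_atLeast_nonpos[OF nonneg, of v] by (cases "v \<le> 0") auto

lemma bdd_below_measure_atLeast_less: "q \<le> 1 \<Longrightarrow> bdd_below {v. measure M {v..} < q}"
  using measure_atLeast_less_imp_pos by (intro bdd_belowI[of _ 0]) (simp add: less_imp_le)

lemma value_fn_le: "q \<le> 1 \<Longrightarrow> measure M {v..} < q \<Longrightarrow> value_fn M q \<le> v"
  unfolding value_fn_eq_Inf by (auto intro: cInf_lower bdd_below_measure_atLeast_less)

lemma value_fn_nonneg:
  assumes "0 < q" "q \<le> 1"
  shows "0 \<le> value_fn M q"
  unfolding value_fn_eq_Inf
proof (rule cInf_greatest)
  show "{v. measure M {v..} < q} \<noteq> {}"
    using ex_measure_atLeast_less[OF assms(1)] by simp
  show "0 \<le> v" if "v \<in> {v. measure M {v..} < q}" for v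
    using measure_atLeast_less_imp_pos[of v q] that assms(2) by simp
qed

lemma le_measure_atLeast_value_fn:
  assumes "q \<le> 1"
  shows "q \<le> measure M {value_fn M q..}"
proof (rule le_measure_atLeast_if_le_below)
  fix v assume "v < value_fn M q"
  then show "q \<le> measure M {v..}"
    using value_fn_le[OF assms, of v] by (cases "measure M {v..} < q") auto
qed

lemma le_value_fn_measure_atLeast:
  assumes "0 < measure M {t..}"
  shows "t \<le> value_fn M (measure M {t..})"
  unfolding value_fn_eq_Inf
proof (rule cInf_greatest)
  show "{v. measure M {v..} < measure M {t..}} \<noteq> {}"
    using ex_measure_atLeast_less[OF assms] by simp
  show "t \<le> v" if "v \<in> {v. measure M {v..} < measure M {t..}}" for v
    using that measure_atLeast_antimono[of v t] by (cases "t \<le> v") auto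
qed

context
  fixes p :: real
  assumes p_max: "\<And>t. t * measure M {t..} \<le> p * measure M {p..}"
begin

lemma max_revenue_nonneg: "0 \<le> p * measure M {p..}"
  using p_max[of 0] by simp

lemma rev_curve_le_max:
  assumes "0 \<le> q" "q \<le> 1"
  shows "rev_curve M q \<le> p * measure M {p..}"
proof (cases "q = 0")
  case True
  then show ?thesis
    using max_revenue_nonneg by (simp add: rev_curve_def)
next
  case False
  then have "0 < q"
    using assms by simp
  then have "q * value_fn M q \<le> measure M {value_fn M q..} * value_fn M q"
    using assms by (intro mult_right_mono le_measure_atLeast_value_fn value_fn_nonneg)
  also have "\<dots> \<le> p * measure M {p..}"
    using p_max[of "value_fn M q"] by (simp add: mult.commute)
  finally show ?thesis
    by (simp add: rev_curve_def)
qed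

lemma rev_curve_attains_max:
  obtains q where "0 < q" "q \<le> 1" "p * measure M {p..} \<le> rev_curve M q"
proof (cases "0 < p * measure M {p..}")
  case True
  then have pos: "0 < measure M {p..}"
    by (simp add: zero_less_mult_iff)
  then have "p * measure M {p..} \<le> measure M {p..} * value_fn M (measure M {p..})"
    using le_value_fn_measure_atLeast[OF pos] by (simp add: mult.commute)
  then show ?thesis
    using that[of "measure M {p..}"] pos by (simp add: rev_curve_def)
next
  case False
  then show ?thesis
    using that[of 1] value_fn_nonneg[of 1] by (simp add: rev_curve_def)
qed

lemma pos_in_rev_curve_argmax:
  obtains q0 where "0 < q0" "q0 \<in> rev_curve_argmax M"
proof -
  obtain q0 where q0: "0 < q0" "q0 \<le> 1" "p * measure M {p..} \<le> rev_curve M q0"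
    using rev_curve_attains_max .
  then have "q0 \<in> rev_curve_argmax M"
    using rev_curve_le_max unfolding rev_curve_argmax_def by fastforce
  then show ?thesis
    using that q0(1) by blast
qed

lemma max_revenue_le_rev_curve_argmax:
  assumes "q \<in> rev_curve_argmax M"
  shows "p * measure M {p..} \<le> rev_curve M q"
proof -
  obtain q0 where "0 < q0" "q0 \<le> 1" "p * measure M {p..} \<le> rev_curve M q0"
    using rev_curve_attains_max .
  moreover have "rev_curve M q0 \<le> rev_curve M q"
    using assms calculation(1,2) unfolding rev_curve_argmax_def by simp
  ultimately show ?thesis
    by linarith
qed

lemma q_m_bounds: "0 < q_m M" "q_m M \<le> 1"
proof -
  obtain q0 where q0: "0 < q0" "q0 \<in> rev_curve_argmax M"
    using pos_in_rev_curve_argmax .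
  have "q0 \<le> q_m M"
    unfolding q_m_eq_Sup using q0(2) bdd_above_rev_curve_argmax by (rule cSup_upper)
  then show "0 < q_m M"
    using q0(1) by linarith
  show "q_m M \<le> 1"
    unfolding q_m_eq_Sup using q0(2) by (intro cSup_least) (auto simp: rev_curve_argmax_def)
qed

lemma max_revenue_div_q_m_le_reserve: "p * measure M {p..} / q_m M \<le> lowest_monopoly_reserve M"
  unfolding lowest_monopoly_reserve_def value_fn_eq_Inf
proof (rule cInf_greatest)
  show "{v. measure M {v..} < q_m M} \<noteq> {}"
    using ex_measure_atLeast_less[OF q_m_bounds(1)] by simp
  fix v assume "v \<in> {v. measure M {v..} < q_m M}"
  moreover obtain q0 where "q0 \<in> rev_curve_argmax M"
    using pos_in_rev_curve_argmax .
  ultimately obtain q where q: "q \<in> rev_curve_argmax M" "measure M {v..} < q"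
    using less_cSup_iff[of "rev_curve_argmax M"] bdd_above_rev_curve_argmax
    unfolding q_m_eq_Sup by auto
  have q_pos: "0 < q"
    using q(2) measure_nonneg[of M "{v..}"] by linarith
  have q_le: "q \<le> q_m M" "q \<le> 1"
    using q(1) bdd_above_rev_curve_argmax unfolding q_m_eq_Sup
    by (auto simp: rev_curve_argmax_def intro: cSup_upper)
  have "p * measure M {p..} \<le> q * value_fn M q"
    using max_revenue_le_rev_curve_argmax[OF q(1)] by (simp add: rev_curve_def)
  also have "\<dots> \<le> q * v"
    using q_pos value_fn_le[OF q_le(2) q(2)] by simp
  finally have "p * measure M {p..} / q \<le> v"
    using q_pos by (simp add: divide_le_eq mult.commute)
  moreover have "p * measure M {p..} / q_m M \<le> p * measure M {p..} / q"
    using max_revenue_nonneg q_pos q_le by (intro divide_left_mono) auto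
  ultimately show "p * measure M {p..} / q_m M \<le> v"
    by linarith
qed

lemma lowest_monopoly_reserve_max:
  "0 \<le> lowest_monopoly_reserve M \<and>
   p * measure M {p..} \<le> lowest_monopoly_reserve M * measure M {lowest_monopoly_reserve M..}"
proof -
  define r where "r = lowest_monopoly_reserve M"
  have r_nonneg: "0 \<le> r"
    unfolding r_def lowest_monopoly_reserve_def using value_fn_nonneg[OF q_m_bounds] .
  have "p * measure M {p..} \<le> r * q_m M"
    using max_revenue_div_q_m_le_reserve q_m_bounds(1) unfolding r_def by (simp add: divide_le_eq)
  also have "\<dots> \<le> r * measure M {r..}"
    using r_nonneg le_measure_atLeast_value_fn[OF q_m_bounds(2)]
    unfolding r_def lowest_monopoly_reserve_def by (intro mult_left_mono) auto
  finally show ?thesis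
    using r_nonneg unfolding r_def by simp
qed

end

end

end

section \<open>Posted prices and mixtures of mechanisms\<close>

definition posted_price :: "real \<Rightarrow> mech" where
  "posted_price t = (\<lambda>v. if t \<le> v then 1 else 0, \<lambda>v. if t \<le> v then t else 0)"

definition mix :: "real \<Rightarrow> mech \<Rightarrow> mech \<Rightarrow> mech" where
  "mix w m1 m2 =
     (\<lambda>v. w * fst m1 v + (1 - w) * fst m2 v, \<lambda>v. w * snd m1 v + (1 - w) * snd m2 v)"

lemma lottery_pricing_eq_mix:
  "lottery_pricing lam t1 t2 = mix lam (posted_price t1) (posted_price t2)"
  by (simp add: lottery_pricing_def mix_def posted_price_def fun_eq_iff)

lemma lottery_pricing_same_price: "lottery_pricing lam t t = posted_price t"
  by (simp add: lottery_pricing_def posted_price_def fun_eq_iff algebra_simps)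

lemma posted_price_in_mechs: "0 \<le> t \<Longrightarrow> posted_price t \<in> mechs D"
  unfolding posted_price_def mechs_def by auto

lemma mix_in_mechs:
  assumes "m1 \<in> mechs D" "m2 \<in> mechs D" "0 \<le> w" "w \<le> 1"
  shows "mix w m1 m2 \<in> mechs D"
proof -
  obtain x1 p1 x2 p2 where m: "m1 = (x1, p1)" "m2 = (x2, p2)"
    by fastforce
  note m1 = assms(1)[unfolded m mechs_def, simplified]
    and m2 = assms(2)[unfolded m mechs_def, simplified]
  let ?x = "\<lambda>v. w * x1 v + (1 - w) * x2 v" and ?p = "\<lambda>v. w * p1 v + (1 - w) * p2 v"
  have utility: "?x u * v - ?p u = w * (x1 u * v - p1 u) + (1 - w) * (x2 u * v - p2 u)" for u v
    by (simp add: algebra_simps)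
  have comb_mono: "w * a1 + (1 - w) * a2 \<le> w * b1 + (1 - w) * b2"
    if "a1 \<le> b1" "a2 \<le> b2" for a1 a2 b1 b2 :: real
    using that assms(3,4) by (intro add_mono mult_left_mono) auto
  have comb_nonneg: "0 \<le> w * b1 + (1 - w) * b2" if "0 \<le> b1" "0 \<le> b2" for b1 b2 :: real
    using comb_mono[OF that] by simp
  have comb_le_1: "w * a1 + (1 - w) * a2 \<le> 1" if "a1 \<le> 1" "a2 \<le> 1" for a1 a2 :: real
    using comb_mono[OF that] by simp
  have [measurable]: "x1 \<in> borel_measurable borel" "x2 \<in> borel_measurable borel"
    "p1 \<in> borel_measurable borel" "p2 \<in> borel_measurable borel"
    using m1 m2 by auto
  have "?x \<in> borel_measurable borel" "?p \<in> borel_measurable borel"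
    by measurable
  moreover have "0 \<le> ?x v \<and> ?x v \<le> 1 \<and> 0 \<le> ?p v \<and> 0 \<le> ?x v * v - ?p v" if "v \<in> supp D" for v
  proof -
    have "0 \<le> x1 v \<and> x1 v \<le> 1 \<and> 0 \<le> p1 v \<and> 0 \<le> x1 v * v - p1 v"
      "0 \<le> x2 v \<and> x2 v \<le> 1 \<and> 0 \<le> p2 v \<and> 0 \<le> x2 v * v - p2 v"
      using that m1 m2 by auto
    then show ?thesis
      unfolding utility by (simp add: comb_nonneg comb_le_1)
  qed
  moreover have "?x u * v - ?p u \<le> ?x v * v - ?p v" if "v \<in> supp D" "u \<in> supp D" for u v
    unfolding utility using that m1 m2 by (intro comb_mono) auto
  ultimately show ?thesis
    unfolding m mix_def mechs_def by simp
qed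

lemma lottery_pricing_in_mechs:
  "0 \<le> lam \<Longrightarrow> lam \<le> 1 \<Longrightarrow> 0 \<le> t1 \<Longrightarrow> 0 \<le> t2 \<Longrightarrow> lottery_pricing lam t1 t2 \<in> mechs D"
  unfolding lottery_pricing_eq_mix by (intro mix_in_mechs posted_price_in_mechs)

lemma revenue_posted_price: "revenue D (posted_price t) = (\<integral>\<^sup>+ v. indicator {t..} v * ennreal t \<partial>D)"
  unfolding revenue_def posted_price_def by (intro nn_integral_cong) auto

lemma surplus_posted_price:
  "surplus D (posted_price t) = (\<integral>\<^sup>+ v. indicator {t..} v * ennreal (v - t) \<partial>D)"
  unfolding surplus_def posted_price_def by (intro nn_integral_cong) auto

lemma pareto_optimal_eq_if_weakly_dominated:
  assumes "pareto_optimal D m" "m' \<in> mechs D"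
    and "revenue D m \<le> revenue D m'" "surplus D m \<le> surplus D m'"
  shows "revenue D m' = revenue D m \<and> surplus D m' = surplus D m"
  using assms unfolding pareto_optimal_def pareto_dominated_def by force

lemma nn_integral_convex_combination:
  assumes "f \<in> borel_measurable M" "g \<in> borel_measurable M" "0 \<le> w" "w \<le> 1"
    and "AE x in M. 0 \<le> f x" "AE x in M. 0 \<le> g x"
  shows "(\<integral>\<^sup>+ x. ennreal (w * f x + (1 - w) * g x) \<partial>M) =
    ennreal w * (\<integral>\<^sup>+ x. ennreal (f x) \<partial>M) + ennreal (1 - w) * (\<integral>\<^sup>+ x. ennreal (g x) \<partial>M)"
proof -
  have "(\<integral>\<^sup>+ x. ennreal (w * f x + (1 - w) * g x) \<partial>M) =
      (\<integral>\<^sup>+ x. ennreal w * ennreal (f x) + ennreal (1 - w) * ennreal (g x) \<partial>M)"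
    using assms(5,6) by (intro nn_integral_cong_AE, eventually_elim)
      (use assms(3,4) in \<open>simp add: ennreal_plus ennreal_mult\<close>)
  also have "\<dots> = ennreal w * (\<integral>\<^sup>+ x. ennreal (f x) \<partial>M) + ennreal (1 - w) * (\<integral>\<^sup>+ x. ennreal (g x) \<partial>M)"
    using assms(1,2) by (simp add: nn_integral_add nn_integral_cmult)
  finally show ?thesis .
qed

context real_distribution
begin

lemma AE_mechanism_bounds:
  assumes "(x, p) \<in> mechs M"
  shows "AE v in M. 0 \<le> x v \<and> x v \<le> 1 \<and> 0 \<le> p v \<and> 0 \<le> x v * v - p v"
  using AE_in_supp by eventually_elim (use assms in \<open>auto simp: mechs_def\<close>)

lemma
  assumes "m1 \<in> mechs M" "m2 \<in> mechs M" "0 \<le> w" "w \<le> 1"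
  shows revenue_mix: "revenue M (mix w m1 m2) = ennreal w * revenue M m1 + ennreal (1 - w) * revenue M m2"
    and surplus_mix: "surplus M (mix w m1 m2) = ennreal w * surplus M m1 + ennreal (1 - w) * surplus M m2"
proof -
  obtain x1 p1 x2 p2 where m: "m1 = (x1, p1)" "m2 = (x2, p2)"
    by fastforce
  have meas: "x1 \<in> borel_measurable borel" "x2 \<in> borel_measurable borel"
    "p1 \<in> borel_measurable borel" "p2 \<in> borel_measurable borel"
    using assms(1,2) unfolding m mechs_def by auto
  note AE1 = AE_mechanism_bounds[OF assms(1)[unfolded m]] and AE2 = AE_mechanism_bounds[OF assms(2)[unfolded m]]
  show "revenue M (mix w m1 m2) = ennreal w * revenue M m1 + ennreal (1 - w) * revenue M m2"
    unfolding revenue_def mix_def m snd_conv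
    by (rule nn_integral_convex_combination) (use assms(3,4) AE1 AE2 meas in \<open>auto elim: AE_mp\<close>)
  have utility: "(w * x1 v + (1 - w) * x2 v) * v - (w * p1 v + (1 - w) * p2 v) =
      w * (x1 v * v - p1 v) + (1 - w) * (x2 v * v - p2 v)" for v
    by (simp add: algebra_simps)
  show "surplus M (mix w m1 m2) = ennreal w * surplus M m1 + ennreal (1 - w) * surplus M m2"
    unfolding surplus_def mix_def m fst_conv snd_conv utility
    by (rule nn_integral_convex_combination) (use assms(3,4) AE1 AE2 meas in \<open>auto elim: AE_mp\<close>)
qed

end

section \<open>Supporting lines and averages over the unit interval\<close>

lemma ge_on_closed_quadrant:
  fixes a b c n1 n2 :: real
  assumes "\<And>a' b'. a < a' \<Longrightarrow> b < b' \<Longrightarrow> c \<le> n1 * a' + n2 * b'" "a \<le> a'" "b \<le> b'"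
  shows "c \<le> n1 * a' + n2 * b'"
proof -
  have "(a', b') \<in> closure ({a<..} \<times> {b<..})"
    using assms(2,3) by (simp add: closure_Times)
  moreover have "continuous_on (closure ({a<..} \<times> {b<..})) (\<lambda>y. n1 * fst y + n2 * snd y)"
    by (intro continuous_intros)
  ultimately show ?thesis
    using continuous_ge_on_closure[of "{a<..} \<times> {b<..}" "\<lambda>y. n1 * fst y + n2 * snd y" "(a', b')" c] assms(1)
    by auto
qed

lemma nonneg_supporting_line:
  fixes A :: "(real \<times> real) set"
  assumes "convex A" "z \<in> A" and undominated: "\<And>y. y \<in> A \<Longrightarrow> \<not> (fst z < fst y \<and> snd z < snd y)"
  obtains n1 n2 where "0 \<le> n1" "0 \<le> n2" "n1 \<noteq> 0 \<or> n2 \<noteq> 0"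
    "\<And>y. y \<in> A \<Longrightarrow> n1 * fst y + n2 * snd y \<le> n1 * fst z + n2 * snd z"
proof -
  obtain a b where z: "z = (a, b)"
    by fastforce
  let ?T = "{a<..} \<times> {b<..}"
  have "A \<inter> ?T = {}"
  proof (intro equals0I)
    fix y assume "y \<in> A \<inter> ?T"
    then show False
      using undominated[of y] z by (cases y) auto
  qed
  moreover have "convex ?T"
    by (intro convex_Times convex_real_interval)
  moreover have "(a + 1, b + 1) \<in> ?T"
    by simp
  ultimately obtain n c where n: "n \<noteq> 0" and "\<forall>y\<in>A. inner n y \<le> c" "\<forall>y\<in>?T. c \<le> inner n y"
    using separating_hyperplane_sets[OF assms(1), of ?T] assms(2) by (metis empty_iff)
  moreover obtain n1 n2 where n_eq: "n = (n1, n2)"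
    by fastforce
  ultimately have A_below: "\<And>y. y \<in> A \<Longrightarrow> n1 * fst y + n2 * snd y \<le> c"
    and T_above: "\<And>y. y \<in> ?T \<Longrightarrow> c \<le> n1 * fst y + n2 * snd y"
    by (auto simp: inner_prod_def)
  have "c \<le> n1 * a' + n2 * b'" if "a < a'" "b < b'" for a' b'
    using T_above[of "(a', b')"] that by simp
  then have closure_above: "c \<le> n1 * a' + n2 * b'" if "a \<le> a'" "b \<le> b'" for a' b'
    using ge_on_closed_quadrant that by blast
  have "c \<le> n1 * a + n2 * b"
    using closure_above by simp
  then have "0 \<le> n1" "0 \<le> n2"
    using A_below[OF assms(2)] closure_above[of "a + 1" b] closure_above[of a "b + 1"] z
    by (simp_all add: algebra_simps)
  moreover have "n1 \<noteq> 0 \<or> n2 \<noteq> 0"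
    using n n_eq by (auto simp: zero_prod_def)
  ultimately show ?thesis
    using that A_below \<open>c \<le> n1 * a + n2 * b\<close> unfolding z fst_conv snd_conv by (meson order_trans)
qed

lemma eq_if_projections_eq:
  fixes n1 n2 y1 y2 z1 z2 :: real
  assumes "n1 \<noteq> 0 \<or> n2 \<noteq> 0"
    and "n1 * y1 + n2 * y2 = n1 * z1 + n2 * z2" "n1 * y2 - n2 * y1 = n1 * z2 - n2 * z1"
  shows "y1 = z1 \<and> y2 = z2"
proof -
  have "(n1\<^sup>2 + n2\<^sup>2) * (y1 - z1) = 0" "(n1\<^sup>2 + n2\<^sup>2) * (y2 - z2) = 0"
    using assms(2,3) by algebra+
  moreover have "n1\<^sup>2 + n2\<^sup>2 \<noteq> 0"
    using assms(1) by (simp add: sum_power2_eq_zero_iff)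
  ultimately show ?thesis
    by (metis eq_iff_diff_eq_0 mult_eq_0_iff)
qed

lemma ex_convex_combination_eq:
  fixes a b c :: real
  assumes "a \<le> c" "c \<le> b"
  obtains lam where "lam \<in> {0..1}" "lam * a + (1 - lam) * b = c"
proof (cases "a = b")
  case True
  then show ?thesis
    using assms that[of 1] by simp
next
  case False
  then have "0 < b - a"
    using assms by simp
  define lam where "lam = (b - c) / (b - a)"
  have "lam * a + (1 - lam) * b = b - lam * (b - a)"
    by (simp add: algebra_simps)
  also have "\<dots> = c"
    using \<open>0 < b - a\<close> by (simp add: lam_def)
  finally show ?thesis
    using assms \<open>0 < b - a\<close> by (intro that[of lam]) (auto simp: lam_def divide_le_eq)
qed

lemma integral_unit_interval_const: "(\<integral>s. indicator {0..1::real} s * c \<partial>lborel) = (c :: real)"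
  using content_real[of "0::real" 1] by simp

lemma ex_le_unit_interval_mean:
  fixes f :: "real \<Rightarrow> real"
  assumes f: "integrable lborel (\<lambda>s. indicator {0..1} s * f s)"
    and P: "AE s in lborel. s \<in> {0..1} \<longrightarrow> P s"
  shows "\<exists>s\<in>{0..1}. P s \<and> f s \<le> (\<integral>s. indicator {0..1} s * f s \<partial>lborel)"
proof (rule ccontr)
  define I where "I = (\<integral>s. indicator {0..1} s * f s \<partial>lborel)"
  define g where "g s = indicator {0..1} s * f s - indicator {0..1} s * I" for s
  assume "\<not> ?thesis"
  then have above: "I < f s" if "s \<in> {0..1}" "P s" for s
    using that unfolding I_def by force
  have g: "integrable lborel g"
    unfolding g_def using f by simp
  have "(\<integral>s. g s \<partial>lborel) = 0"
    unfolding g_def using f by (simp add: I_def)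
  moreover have "AE s in lborel. 0 \<le> g s"
    using P by eventually_elim (auto simp: g_def indicator_def intro!: less_imp_le[OF above])
  ultimately have "AE s in lborel. g s = 0"
    using integral_nonneg_eq_0_iff_AE[OF g] by simp
  with P have "AE s in lborel. s \<notin> {0..1::real}"
  proof eventually_elim
    case (elim s)
    then show ?case
      using above[of s] by (auto simp: g_def)
  qed
  then show False
    by (subst (asm) AE_iff_measurable[of "{0..1}"]) auto
qed

lemma unit_interval_points_around_mean:
  fixes f :: "real \<Rightarrow> real"
  assumes f: "integrable lborel (\<lambda>s. indicator {0..1} s * f s)"
    and P: "AE s in lborel. s \<in> {0..1} \<longrightarrow> P s"
  obtains s1 s2 where "s1 \<in> {0..1}" "s2 \<in> {0..1}" "P s1" "P s2"
    "f s1 \<le> (\<integral>s. indicator {0..1} s * f s \<partial>lborel)" "(\<integral>s. indicator {0..1} s * f s \<partial>lborel) \<le> f s2"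
proof -
  obtain s1 where "s1 \<in> {0..1}" "P s1" "f s1 \<le> (\<integral>s. indicator {0..1} s * f s \<partial>lborel)"
    using ex_le_unit_interval_mean[OF f P] by blast
  moreover obtain s2 where "s2 \<in> {0..1}" "P s2" "- f s2 \<le> (\<integral>s. indicator {0..1} s * - f s \<partial>lborel)"
    using ex_le_unit_interval_mean[of "\<lambda>s. - f s", OF _ P] f by auto
  ultimately show ?thesis
    using that by simp
qed

lemma unit_interval_mean_eq_if_le:
  fixes f :: "real \<Rightarrow> real"
  assumes f: "integrable lborel (\<lambda>s. indicator {0..1} s * f s)"
    and below: "\<And>s. s \<in> {0..1} \<Longrightarrow> f s \<le> c"
    and above: "c \<le> (\<integral>s. indicator {0..1} s * f s \<partial>lborel)"
  shows "(\<integral>s. indicator {0..1} s * f s \<partial>lborel) = c"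
    and "AE s in lborel. s \<in> {0..1} \<longrightarrow> f s = c"
proof -
  define k where "k s = indicator {0..1} s * c - indicator {0..1} s * f s" for s
  have k: "integrable lborel k"
    using f unfolding k_def[abs_def] by simp
  have k_nonneg: "0 \<le> k s" for s
    using below[of s] by (cases "s \<in> {0..1}") (simp_all add: k_def)
  have k_int: "(\<integral>s. k s \<partial>lborel) = c - (\<integral>s. indicator {0..1} s * f s \<partial>lborel)"
    using f by (simp add: k_def integral_unit_interval_const)
  moreover have "0 \<le> (\<integral>s. k s \<partial>lborel)"
    using k_nonneg by (simp add: integral_nonneg)
  ultimately show "(\<integral>s. indicator {0..1} s * f s \<partial>lborel) = c"
    using above by linarith
  with k_int have "AE s in lborel. k s = 0"
    using integral_nonneg_eq_0_iff_AE[OF k] k_nonneg by simp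
  then show "AE s in lborel. s \<in> {0..1} \<longrightarrow> f s = c"
    by eventually_elim (auto simp: k_def)
qed

lemma unit_interval_mean_on_supporting_line:
  fixes f g :: "real \<Rightarrow> real"
  defines "mf \<equiv> \<integral>s. indicator {0..1} s * f s \<partial>lborel"
    and "mg \<equiv> \<integral>s. indicator {0..1} s * g s \<partial>lborel"
  assumes f: "integrable lborel (\<lambda>s. indicator {0..1} s * f s)"
    and g: "integrable lborel (\<lambda>s. indicator {0..1} s * g s)"
    and n: "n1 \<noteq> 0 \<or> n2 \<noteq> 0"
    and below: "\<And>s. s \<in> {0..1} \<Longrightarrow> n1 * f s + n2 * g s \<le> c"
    and above: "c \<le> n1 * mf + n2 * mg"
  obtains s1 s2 lam where "s1 \<in> {0..1}" "s2 \<in> {0..1}" "lam \<in> {0..1}"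
    "lam * f s1 + (1 - lam) * f s2 = mf" "lam * g s1 + (1 - lam) * g s2 = mg"
proof -
  have l: "integrable lborel (\<lambda>s. indicator {0..1} s * (n1 * f s + n2 * g s))"
    and l_mean: "(\<integral>s. indicator {0..1} s * (n1 * f s + n2 * g s) \<partial>lborel) = n1 * mf + n2 * mg"
    using f g by (simp_all add: mf_def mg_def distrib_left mult.left_commute)
  have on_line: "n1 * mf + n2 * mg = c" "AE s in lborel. s \<in> {0..1} \<longrightarrow> n1 * f s + n2 * g s = c"
    using unit_interval_mean_eq_if_le[where f = "\<lambda>s. n1 * f s + n2 * g s", OF l below] above l_mean
    by simp_all
  define h where "h s = n1 * g s - n2 * f s" for s
  have h: "integrable lborel (\<lambda>s. indicator {0..1} s * h s)"
    and h_mean: "(\<integral>s. indicator {0..1} s * h s \<partial>lborel) = n1 * mg - n2 * mf"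
    using f g by (simp_all add: h_def mf_def mg_def right_diff_distrib mult.left_commute)
  obtain s1 s2 where s1: "s1 \<in> {0..1}" "n1 * f s1 + n2 * g s1 = c"
    and s2: "s2 \<in> {0..1}" "n1 * f s2 + n2 * g s2 = c"
    and h_around: "h s1 \<le> n1 * mg - n2 * mf" "n1 * mg - n2 * mf \<le> h s2"
    using unit_interval_points_around_mean[OF h on_line(2)] unfolding h_mean by metis
  obtain lam where lam: "lam \<in> {0..1}" "lam * h s1 + (1 - lam) * h s2 = n1 * mg - n2 * mf"
    using ex_convex_combination_eq[OF h_around] by blast
  have "lam * f s1 + (1 - lam) * f s2 = mf \<and> lam * g s1 + (1 - lam) * g s2 = mg"
  proof (rule eq_if_projections_eq[OF n])
    have "n1 * (lam * f s1 + (1 - lam) * f s2) + n2 * (lam * g s1 + (1 - lam) * g s2) =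
        lam * (n1 * f s1 + n2 * g s1) + (1 - lam) * (n1 * f s2 + n2 * g s2)"
      by (simp add: algebra_simps)
    then show "n1 * (lam * f s1 + (1 - lam) * f s2) + n2 * (lam * g s1 + (1 - lam) * g s2) = n1 * mf + n2 * mg"
      using s1(2) s2(2) on_line(1) by (simp add: algebra_simps)
    have "n1 * (lam * g s1 + (1 - lam) * g s2) - n2 * (lam * f s1 + (1 - lam) * f s2) =
        lam * h s1 + (1 - lam) * h s2"
      by (simp add: h_def algebra_simps)
    then show "n1 * (lam * g s1 + (1 - lam) * g s2) - n2 * (lam * f s1 + (1 - lam) * f s2) = n1 * mg - n2 * mf"
      using lam(2) by simp
  qed
  then show thesis
    using that s1(1) s2(1) lam(1) by blast
qed

lemma integrable_unit_interval:
  fixes f :: "real \<Rightarrow> real"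
  assumes "f \<in> borel_measurable borel" "\<And>s. s \<in> {0..1} \<Longrightarrow> \<bar>f s\<bar> \<le> B"
  shows "integrable lborel (\<lambda>s. indicator {0..1} s * f s)"
  using assms
  by (intro integrableI_bounded_set[where A = "{0..1}" and B = B]) (auto simp: indicator_def)

lemma le_unit_interval_mean_if_le_nn_integral:
  fixes f :: "real \<Rightarrow> real"
  assumes "integrable lborel (\<lambda>s. indicator {0..1} s * f s)" "\<And>s. 0 \<le> f s"
    and "ennreal a \<le> (\<integral>\<^sup>+ s. indicator {0..1} s * ennreal (f s) \<partial>lborel)"
  shows "a \<le> (\<integral>s. indicator {0..1} s * f s \<partial>lborel)"
proof -
  have "(\<integral>\<^sup>+ s. indicator {0..1} s * ennreal (f s) \<partial>lborel) = (\<integral>\<^sup>+ s. ennreal (indicator {0..1} s * f s) \<partial>lborel)"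
    by (intro nn_integral_cong) (simp add: indicator_def)
  also have "\<dots> = ennreal (\<integral>s. indicator {0..1} s * f s \<partial>lborel)"
    using assms(1,2) by (intro nn_integral_eq_integral) (auto simp: indicator_def)
  finally show ?thesis
    using assms(2,3) by (simp add: ennreal_le_iff integral_nonneg)
qed

section \<open>Outcomes of mechanisms\<close>

(* enn2real maps \<infinity> to 0, so outcomes are only used for value distributions with finite mean. *)
definition outcome :: "real measure \<Rightarrow> mech \<Rightarrow> real \<times> real" where
  "outcome D m = (enn2real (revenue D m), enn2real (surplus D m))"

context real_distribution
begin

lemma revenue_posted_price_eq:
  "0 \<le> t \<Longrightarrow> revenue M (posted_price t) = ennreal (t * measure M {t..})"
  unfolding revenue_posted_price
  by (simp add: mult.commute[of "indicator _ _"] nn_integral_cmult_indicator emeasure_eq_measure ennreal_mult)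

lemma surplus_posted_price_antimono:
  "s \<le> t \<Longrightarrow> surplus M (posted_price t) \<le> surplus M (posted_price s)"
  unfolding surplus_posted_price by (intro nn_integral_mono) (auto simp: indicator_def ennreal_leI)

lemma mean_le_surplus_posted_price:
  assumes "0 \<le> t"
  shows "(\<integral>\<^sup>+ v. ennreal v \<partial>M) \<le> surplus M (posted_price t) + ennreal t"
proof -
  have "(\<integral>\<^sup>+ v. ennreal v \<partial>M) \<le> (\<integral>\<^sup>+ v. indicator {t..} v * ennreal (v - t) + ennreal t \<partial>M)"
    using assms by (intro nn_integral_mono) (auto simp: indicator_def ennreal_leI simp flip: ennreal_plus)
  also have "\<dots> = surplus M (posted_price t) + ennreal t"
    unfolding surplus_posted_price by (simp add: nn_integral_add emeasure_space_1[unfolded space_eq_univ])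
  finally show ?thesis .
qed

lemma revenue_posted_price_measurable [measurable]:
  "(\<lambda>t. revenue M (posted_price t)) \<in> borel_measurable borel"
  unfolding revenue_posted_price indicator_def atLeast_iff by measurable

lemma surplus_posted_price_measurable [measurable]:
  "(\<lambda>t. surplus M (posted_price t)) \<in> borel_measurable borel"
  unfolding surplus_posted_price indicator_def atLeast_iff by measurable

lemma lowest_monopoly_reserve_posted_price_optimal:
  assumes "AE v in M. 0 \<le> v" and "\<And>t. t * (1 - cdf_lt M t) \<le> p * (1 - cdf_lt M p)"
  shows "0 \<le> lowest_monopoly_reserve M"
    and "0 \<le> t \<Longrightarrow> revenue M (posted_price t) \<le> revenue M (posted_price (lowest_monopoly_reserve M))"
proof -
  have p_max: "t * measure M {t..} \<le> p * measure M {p..}" for t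
    using assms(2) by (simp add: measure_atLeast_eq)
  note reserve = lowest_monopoly_reserve_max[OF assms(1) p_max]
  then show "0 \<le> lowest_monopoly_reserve M"
    by simp
  show "revenue M (posted_price t) \<le> revenue M (posted_price (lowest_monopoly_reserve M))" if "0 \<le> t"
    using that reserve p_max[of t] by (simp add: revenue_posted_price_eq ennreal_leI)
qed

lemma posted_price_equivalent_if_infinite_mean:
  fixes \<phi> :: "real \<Rightarrow> real"
  assumes "pareto_optimal M m" "(\<integral>\<^sup>+ v. ennreal v \<partial>M) = \<infinity>" "0 \<le> r"
    and r_max: "\<And>t. 0 \<le> t \<Longrightarrow> revenue M (posted_price t) \<le> revenue M (posted_price r)"
    and "\<And>s. 0 \<le> \<phi> s"
    and "revenue M m \<le> (\<integral>\<^sup>+ s. indicator {0..1} s * revenue M (posted_price (\<phi> s)) \<partial>lborel)"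
  shows "revenue M (posted_price r) = revenue M m \<and> surplus M (posted_price r) = surplus M m"
proof (rule pareto_optimal_eq_if_weakly_dominated[OF assms(1) posted_price_in_mechs[OF assms(3)]])
  have "(\<integral>\<^sup>+ s. indicator {0..1} s * revenue M (posted_price (\<phi> s)) \<partial>lborel) \<le>
      (\<integral>\<^sup>+ s. indicator {0..1::real} s * revenue M (posted_price r) \<partial>lborel)"
  proof (rule nn_integral_mono)
    fix s
    show "indicator {0..1} s * revenue M (posted_price (\<phi> s)) \<le> indicator {0..1} s * revenue M (posted_price r)"
      using assms(5) r_max by (intro mult_left_mono) auto
  qed
  with assms(6) show "revenue M m \<le> revenue M (posted_price r)"
    by (simp add: mult.commute[of "indicator _ _"] nn_integral_cmult_indicator)
  have "surplus M (posted_price r) = \<infinity>"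
    using mean_le_surplus_posted_price[OF assms(3)] assms(2) by (simp add: top_unique)
  then show "surplus M m \<le> surplus M (posted_price r)"
    by simp
qed

context
  assumes nonneg: "AE v in M. 0 \<le> v"
begin

lemma
  assumes "m \<in> mechs M"
  shows revenue_le_mean: "revenue M m \<le> (\<integral>\<^sup>+ v. ennreal v \<partial>M)"
    and surplus_le_mean: "surplus M m \<le> (\<integral>\<^sup>+ v. ennreal v \<partial>M)"
proof -
  obtain x p where m: "m = (x, p)"
    by fastforce
  have "AE v in M. p v \<le> v \<and> x v * v - p v \<le> v"
    using AE_mechanism_bounds[OF assms[unfolded m]] nonneg
  proof eventually_elim
    case (elim v)
    then have "x v * v \<le> v"
      using mult_right_mono[of "x v" 1 v] by simp
    then show ?case
      using elim by simp
  qed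
  then show "revenue M m \<le> (\<integral>\<^sup>+ v. ennreal v \<partial>M)" "surplus M m \<le> (\<integral>\<^sup>+ v. ennreal v \<partial>M)"
    unfolding revenue_def surplus_def m
    by (auto intro!: nn_integral_mono_AE ennreal_leI elim: AE_mp)
qed

context
  assumes finite_mean: "(\<integral>\<^sup>+ v. ennreal v \<partial>M) \<noteq> \<infinity>"
begin

lemma
  assumes "m \<in> mechs M"
  shows revenue_eq_outcome: "revenue M m = ennreal (fst (outcome M m))"
    and surplus_eq_outcome: "surplus M m = ennreal (snd (outcome M m))"
proof -
  have "revenue M m \<noteq> \<infinity>" "surplus M m \<noteq> \<infinity>"
    using revenue_le_mean[OF assms] surplus_le_mean[OF assms] finite_mean by (auto dest: neq_top_trans)
  then show "revenue M m = ennreal (fst (outcome M m))" "surplus M m = ennreal (snd (outcome M m))"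
    by (simp_all add: outcome_def ennreal_enn2real_if)
qed

lemma outcome_bounded:
  assumes "m \<in> mechs M"
  shows "fst (outcome M m) \<in> {0..enn2real (\<integral>\<^sup>+ v. ennreal v \<partial>M)}"
    and "snd (outcome M m) \<in> {0..enn2real (\<integral>\<^sup>+ v. ennreal v \<partial>M)}"
  using revenue_le_mean[OF assms] surplus_le_mean[OF assms] finite_mean
  by (auto simp: outcome_def top.not_eq_extremum intro!: enn2real_mono)

lemma outcome_mix:
  assumes "m1 \<in> mechs M" "m2 \<in> mechs M" "0 \<le> w" "w \<le> 1"
  shows "outcome M (mix w m1 m2) = w *\<^sub>R outcome M m1 + (1 - w) *\<^sub>R outcome M m2"
proof -
  have comb: "ennreal w * ennreal a + ennreal (1 - w) * ennreal b = ennreal (w * a + (1 - w) * b)"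
    and comb_nonneg: "0 \<le> w * a + (1 - w) * b"
    if "0 \<le> a" "0 \<le> b" for a b
    using that assms(3,4) by (simp_all add: ennreal_mult ennreal_plus)
  note bounds = outcome_bounded[OF assms(1)] outcome_bounded[OF assms(2)]
  have "revenue M (mix w m1 m2) = ennreal (w * fst (outcome M m1) + (1 - w) * fst (outcome M m2))"
    "surplus M (mix w m1 m2) = ennreal (w * snd (outcome M m1) + (1 - w) * snd (outcome M m2))"
    using assms bounds
    by (simp_all only: revenue_mix surplus_mix revenue_eq_outcome[OF assms(1)] revenue_eq_outcome[OF assms(2)]
        surplus_eq_outcome[OF assms(1)] surplus_eq_outcome[OF assms(2)] comb atLeastAtMost_iff)
  then show ?thesis
    using bounds by (simp add: outcome_def comb_nonneg)
qed

lemma convex_outcomes: "convex (outcome M ` mechs M)"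
proof (rule convexI)
  fix y z and u v :: real
  assume "y \<in> outcome M ` mechs M" "z \<in> outcome M ` mechs M" "0 \<le> u" "0 \<le> v" "u + v = 1"
  then obtain m1 m2 where m: "m1 \<in> mechs M" "m2 \<in> mechs M" "y = outcome M m1" "z = outcome M m2"
    and u: "0 \<le> u" "u \<le> 1" and v: "v = 1 - u"
    by auto
  then have "u *\<^sub>R y + v *\<^sub>R z = outcome M (mix u m1 m2)"
    by (simp add: outcome_mix)
  then show "u *\<^sub>R y + v *\<^sub>R z \<in> outcome M ` mechs M"
    using m u by (simp add: mix_in_mechs)
qed

lemma pareto_optimal_eq_if_outcome_le:
  assumes "pareto_optimal M m" "m' \<in> mechs M"
    and "fst (outcome M m) \<le> fst (outcome M m')" "snd (outcome M m) \<le> snd (outcome M m')"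
  shows "revenue M m' = revenue M m \<and> surplus M m' = surplus M m"
proof -
  have "m \<in> mechs M"
    using assms(1) by (simp add: pareto_optimal_def)
  then show ?thesis
    using assms by (intro pareto_optimal_eq_if_weakly_dominated)
      (simp_all add: revenue_eq_outcome surplus_eq_outcome ennreal_leI)
qed

lemma pareto_optimal_outcome_not_dominated:
  assumes "pareto_optimal M m" "y \<in> outcome M ` mechs M"
  shows "\<not> (fst (outcome M m) < fst y \<and> snd (outcome M m) < snd y)"
proof
  assume less: "fst (outcome M m) < fst y \<and> snd (outcome M m) < snd y"
  obtain m' where m': "m' \<in> mechs M" "y = outcome M m'"
    using assms(2) by blast
  have "m \<in> mechs M"
    using assms(1) by (simp add: pareto_optimal_def)
  then have "pareto_dominated M m m'"
    using less m' outcome_bounded[OF \<open>m \<in> mechs M\<close>]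
    by (auto simp: pareto_dominated_def revenue_eq_outcome surplus_eq_outcome ennreal_less_iff
        intro: ennreal_leI)
  then show False
    using assms(1) m'(1) by (auto simp: pareto_optimal_def)
qed

lemma
  fixes \<phi> :: "real \<Rightarrow> real"
  assumes [measurable]: "\<phi> \<in> borel_measurable borel" and "\<And>s. 0 \<le> \<phi> s"
  shows integrable_revenue_random_posted_price:
      "integrable lborel (\<lambda>s. indicator {0..1} s * fst (outcome M (posted_price (\<phi> s))))"
    and integrable_surplus_random_posted_price:
      "integrable lborel (\<lambda>s. indicator {0..1} s * snd (outcome M (posted_price (\<phi> s))))"
  using outcome_bounded[OF posted_price_in_mechs[OF assms(2)]]
  by (auto intro!: integrable_unit_interval simp: outcome_def)

lemma outcome_le_unit_interval_mean:
  fixes \<phi> :: "real \<Rightarrow> real"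
  assumes "m \<in> mechs M" and [measurable]: "\<phi> \<in> borel_measurable borel" and "\<And>s. 0 \<le> \<phi> s"
    and rev: "revenue M m \<le> (\<integral>\<^sup>+ s. indicator {0..1} s * revenue M (posted_price (\<phi> s)) \<partial>lborel)"
    and sur: "surplus M m \<le> (\<integral>\<^sup>+ s. indicator {0..1} s * surplus M (posted_price (\<phi> s)) \<partial>lborel)"
  shows "fst (outcome M m) \<le> (\<integral>s. indicator {0..1} s * fst (outcome M (posted_price (\<phi> s))) \<partial>lborel)"
    and "snd (outcome M m) \<le> (\<integral>s. indicator {0..1} s * snd (outcome M (posted_price (\<phi> s))) \<partial>lborel)"
proof -
  note mechs = posted_price_in_mechs[OF assms(3)]
  show "fst (outcome M m) \<le> (\<integral>s. indicator {0..1} s * fst (outcome M (posted_price (\<phi> s))) \<partial>lborel)"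
  proof (rule le_unit_interval_mean_if_le_nn_integral[OF integrable_revenue_random_posted_price[OF assms(2,3)]])
    show "0 \<le> fst (outcome M (posted_price (\<phi> s)))" for s
      by (simp add: outcome_def)
    show "ennreal (fst (outcome M m)) \<le>
        (\<integral>\<^sup>+ s. indicator {0..1} s * ennreal (fst (outcome M (posted_price (\<phi> s)))) \<partial>lborel)"
      using rev by (simp add: revenue_eq_outcome assms(1) mechs)
  qed
  show "snd (outcome M m) \<le> (\<integral>s. indicator {0..1} s * snd (outcome M (posted_price (\<phi> s))) \<partial>lborel)"
  proof (rule le_unit_interval_mean_if_le_nn_integral[OF integrable_surplus_random_posted_price[OF assms(2,3)]])
    show "0 \<le> snd (outcome M (posted_price (\<phi> s)))" for s
      by (simp add: outcome_def)
    show "ennreal (snd (outcome M m)) \<le>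
        (\<integral>\<^sup>+ s. indicator {0..1} s * ennreal (snd (outcome M (posted_price (\<phi> s)))) \<partial>lborel)"
      using sur by (simp add: surplus_eq_outcome assms(1) mechs)
  qed
qed

lemma pareto_optimal_supporting_line:
  assumes "pareto_optimal M m"
  obtains n1 n2 where "0 \<le> n1" "0 \<le> n2" "n1 \<noteq> 0 \<or> n2 \<noteq> 0"
    "\<And>m'. m' \<in> mechs M \<Longrightarrow>
      n1 * fst (outcome M m') + n2 * snd (outcome M m') \<le> n1 * fst (outcome M m) + n2 * snd (outcome M m)"
proof -
  have "m \<in> mechs M"
    using assms by (simp add: pareto_optimal_def)
  show ?thesis
  proof (rule nonneg_supporting_line[OF convex_outcomes imageI[OF \<open>m \<in> mechs M\<close>]
        pareto_optimal_outcome_not_dominated[OF assms]])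
    fix n1 n2
    assume n: "0 \<le> n1" "0 \<le> n2" "n1 \<noteq> 0 \<or> n2 \<noteq> 0"
      and supporting: "\<And>y. y \<in> outcome M ` mechs M \<Longrightarrow>
        n1 * fst y + n2 * snd y \<le> n1 * fst (outcome M m) + n2 * snd (outcome M m)"
    show thesis
      by (rule that[OF n supporting[OF imageI]])
  qed
qed

lemma two_price_lottery_if_finite_mean:
  fixes \<phi> :: "real \<Rightarrow> real"
  assumes po: "pareto_optimal M m" and [measurable]: "\<phi> \<in> borel_measurable borel" and "\<And>s. 0 \<le> \<phi> s"
    and rev: "revenue M m \<le> (\<integral>\<^sup>+ s. indicator {0..1} s * revenue M (posted_price (\<phi> s)) \<partial>lborel)"
    and sur: "surplus M m \<le> (\<integral>\<^sup>+ s. indicator {0..1} s * surplus M (posted_price (\<phi> s)) \<partial>lborel)"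
  obtains s1 s2 lam where "s1 \<in> {0..1}" "s2 \<in> {0..1}" "lam \<in> {0..1}"
    "revenue M (lottery_pricing lam (\<phi> s1) (\<phi> s2)) = revenue M m"
    "surplus M (lottery_pricing lam (\<phi> s1) (\<phi> s2)) = surplus M m"
proof -
  define F where "F s = outcome M (posted_price (\<phi> s))" for s
  have m: "m \<in> mechs M"
    using po by (simp add: pareto_optimal_def)
  have F_mechs: "posted_price (\<phi> s) \<in> mechs M" for s
    using assms(3) by (rule posted_price_in_mechs)
  obtain n1 n2 where n: "0 \<le> n1" "0 \<le> n2" "n1 \<noteq> 0 \<or> n2 \<noteq> 0"
    and supporting: "\<And>m'. m' \<in> mechs M \<Longrightarrow>
      n1 * fst (outcome M m') + n2 * snd (outcome M m') \<le> n1 * fst (outcome M m) + n2 * snd (outcome M m)"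
    using pareto_optimal_supporting_line[OF po] by blast
  have below: "n1 * fst (F s) + n2 * snd (F s) \<le> n1 * fst (outcome M m) + n2 * snd (outcome M m)"
    if "s \<in> {0..1}" for s
    unfolding F_def by (rule supporting[OF F_mechs])
  note mean = outcome_le_unit_interval_mean[OF m assms(2,3) rev sur, folded F_def]
  have above: "n1 * fst (outcome M m) + n2 * snd (outcome M m) \<le>
      n1 * (\<integral>s. indicator {0..1} s * fst (F s) \<partial>lborel) + n2 * (\<integral>s. indicator {0..1} s * snd (F s) \<partial>lborel)"
    using mean n by (intro add_mono mult_left_mono) auto
  obtain s1 s2 lam where s: "s1 \<in> {0..1}" "s2 \<in> {0..1}" "lam \<in> {0..1}"
    and comb: "lam * fst (F s1) + (1 - lam) * fst (F s2) = (\<integral>s. indicator {0..1} s * fst (F s) \<partial>lborel)"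
      "lam * snd (F s1) + (1 - lam) * snd (F s2) = (\<integral>s. indicator {0..1} s * snd (F s) \<partial>lborel)"
    using unit_interval_mean_on_supporting_line[OF
        integrable_revenue_random_posted_price[OF assms(2,3), folded F_def]
        integrable_surplus_random_posted_price[OF assms(2,3), folded F_def] n(3) below above]
    by blast
  have "outcome M (lottery_pricing lam (\<phi> s1) (\<phi> s2)) = lam *\<^sub>R F s1 + (1 - lam) *\<^sub>R F s2"
    unfolding lottery_pricing_eq_mix F_def using s(3) F_mechs by (intro outcome_mix) auto
  then have "revenue M (lottery_pricing lam (\<phi> s1) (\<phi> s2)) = revenue M m \<and>
      surplus M (lottery_pricing lam (\<phi> s1) (\<phi> s2)) = surplus M m"
    using mean comb s(3) assms(3)
    by (intro pareto_optimal_eq_if_outcome_le[OF po] lottery_pricing_in_mechs) auto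
  then show thesis
    using that s by blast
qed

end

lemma two_price_lottery_if_dominated_by_random_price:
  fixes \<phi> :: "real \<Rightarrow> real"
  assumes po: "pareto_optimal M m"
    and r: "0 \<le> r" "\<And>t. 0 \<le> t \<Longrightarrow> revenue M (posted_price t) \<le> revenue M (posted_price r)"
    and \<phi>: "\<phi> \<in> borel_measurable borel" "\<And>s. 0 \<le> \<phi> s \<and> \<phi> s \<le> r"
    and rev: "revenue M m \<le> (\<integral>\<^sup>+ s. indicator {0..1} s * revenue M (posted_price (\<phi> s)) \<partial>lborel)"
    and sur: "surplus M m \<le> (\<integral>\<^sup>+ s. indicator {0..1} s * surplus M (posted_price (\<phi> s)) \<partial>lborel)"
  shows "\<exists>lam t1 t2. lam \<in> {0..1} \<and> t1 \<in> {0..r} \<and> t2 \<in> {0..r} \<and>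
      revenue M (lottery_pricing lam t1 t2) = revenue M m \<and> surplus M (lottery_pricing lam t1 t2) = surplus M m"
proof (cases "(\<integral>\<^sup>+ v. ennreal v \<partial>M) = \<infinity>")
  case True
  with po r \<phi>(2) rev
  have "revenue M (posted_price r) = revenue M m \<and> surplus M (posted_price r) = surplus M m"
    by (intro posted_price_equivalent_if_infinite_mean) auto
  then show ?thesis
    using r(1) by - (rule exI[of _ 1], rule exI[of _ r], rule exI[of _ r], simp add: lottery_pricing_same_price)
next
  case False
  have "\<And>s. 0 \<le> \<phi> s"
    using \<phi>(2) by simp
  then obtain s1 s2 lam where "lam \<in> {0..1}"
    "revenue M (lottery_pricing lam (\<phi> s1) (\<phi> s2)) = revenue M m"
    "surplus M (lottery_pricing lam (\<phi> s1) (\<phi> s2)) = surplus M m"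
    by (rule two_price_lottery_if_finite_mean[OF False po \<phi>(1) _ rev sur])
  then show ?thesis
    using \<phi>(2)[of s1] \<phi>(2)[of s2]
    by - (rule exI[of _ lam], rule exI[of _ "\<phi> s1"], rule exI[of _ "\<phi> s2"], simp)
qed

end

end

section \<open>Incentive compatible mechanisms as random posted prices\<close>

lemma increment_bound_telescope:
  fixes h X :: "real \<Rightarrow> real"
  assumes step: "\<And>u w. a \<le> u \<Longrightarrow> u \<le> w \<Longrightarrow> w \<le> b \<Longrightarrow> \<bar>h w - h u\<bar> \<le> (w - u) * (X w - X u)"
    and "0 \<le> d" "a + real k * d \<le> b"
  shows "\<bar>h (a + real k * d) - h a\<bar> \<le> d * (X (a + real k * d) - X a)"
  using assms(3)
proof (induction k)
  case 0
  then show ?case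
    by simp
next
  case (Suc k)
  let ?u = "a + real k * d" and ?w = "a + real (Suc k) * d"
  have "a \<le> ?u" "?u \<le> ?w" "?w - ?u = d"
    using \<open>0 \<le> d\<close> by (simp_all add: algebra_simps)
  then have "\<bar>h ?w - h ?u\<bar> \<le> d * (X ?w - X ?u)" and "\<bar>h ?u - h a\<bar> \<le> d * (X ?u - X a)"
    using step[of ?u ?w] Suc by auto
  moreover have "\<bar>h ?w - h a\<bar> \<le> \<bar>h ?w - h ?u\<bar> + \<bar>h ?u - h a\<bar>"
    using abs_triangle_ineq[of "h ?w - h ?u" "h ?u - h a"] by simp
  ultimately have "\<bar>h ?w - h a\<bar> \<le> d * (X ?w - X ?u) + d * (X ?u - X a)"
    by linarith
  also have "\<dots> = d * (X ?w - X a)"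
    by (simp add: algebra_simps)
  finally show ?case .
qed

lemma eq_if_increments_bounded:
  fixes h X :: "real \<Rightarrow> real"
  assumes "a \<le> b"
    and step: "\<And>u w. a \<le> u \<Longrightarrow> u \<le> w \<Longrightarrow> w \<le> b \<Longrightarrow> \<bar>h w - h u\<bar> \<le> (w - u) * (X w - X u)"
  shows "h b = h a"
proof -
  define C where "C = (b - a) * (X b - X a)"
  have bound: "\<bar>h b - h a\<bar> \<le> C / real (Suc K)" for K
  proof -
    define d where "d = (b - a) / real (Suc K)"
    have d: "0 \<le> d" "a + real (Suc K) * d = b"
      using \<open>a \<le> b\<close> by (simp_all add: d_def)
    then show ?thesis
      using increment_bound_telescope[where a = a and b = b and h = h and X = X and k = "Suc K", OF step d(1)]
      by (simp add: C_def d_def)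
  qed
  have "(\<lambda>K. C / real (Suc K)) \<longlonglongrightarrow> 0"
    using lim_const_over_n[of C] by (rule LIMSEQ_Suc)
  then have "\<bar>h b - h a\<bar> \<le> 0"
    using bound by (intro LIMSEQ_le_const) auto
  then show ?thesis
    by simp
qed

locale ic_mechanism = real_distribution D for D :: "real measure" +
  fixes x p :: "real \<Rightarrow> real" and vL :: real
  assumes mech: "(x, p) \<in> mechs D"
    and vL_nonneg: "0 \<le> vL" and vL_in_supp: "vL \<in> supp D"
    and supp_atLeast: "supp D \<subseteq> {vL..}" and supp_interval: "is_interval (supp D)"
begin

lemma
  shows allocation_measurable [measurable]: "x \<in> borel_measurable borel"
    and payment_measurable [measurable]: "p \<in> borel_measurable borel"
    and allocation_bounds: "v \<in> supp D \<Longrightarrow> 0 \<le> x v \<and> x v \<le> 1"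
    and payment_nonneg: "v \<in> supp D \<Longrightarrow> 0 \<le> p v"
    and individually_rational: "v \<in> supp D \<Longrightarrow> p v \<le> x v * v"
    and incentive_compatible: "v \<in> supp D \<Longrightarrow> w \<in> supp D \<Longrightarrow> x w * v - p w \<le> x v * v - p v"
  using mech unfolding mechs_def by auto

lemma in_supp_if_between: "v \<in> supp D \<Longrightarrow> vL \<le> u \<Longrightarrow> u \<le> v \<Longrightarrow> u \<in> supp D"
  using supp_interval vL_in_supp unfolding is_interval_1 by blast

lemma allocation_mono:
  assumes "u \<in> supp D" "w \<in> supp D" "u \<le> w"
  shows "x u \<le> x w"
proof -
  have "(x u - x w) * (w - u) \<le> 0"
    using incentive_compatible[OF assms(1,2)] incentive_compatible[OF assms(2,1)]
    by (simp add: algebra_simps)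
  then show ?thesis
    using assms(3) by (cases "u = w") (auto simp: mult_le_0_iff)
qed

lemma payment_increment_bounds:
  assumes "u \<in> supp D" "w \<in> supp D"
  shows "u * (x w - x u) \<le> p w - p u \<and> p w - p u \<le> w * (x w - x u)"
  using incentive_compatible[OF assms(1,2)] incentive_compatible[OF assms(2,1)]
  by (simp add: algebra_simps)

text \<open>The threshold price of the quantile \<open>s\<close> of the allocation is the lowest type whose allocation
  reaches \<open>s\<close>; on the quantiles \<open>[0, x vL]\<close> served to every type, it is the average price
  \<open>p vL / x vL\<close> paid by the lowest type (the junk value at \<open>x vL = 0\<close> is harmless).\<close>

definition threshold_price :: "real \<Rightarrow> real" where
  "threshold_price s =
     (if s \<le> x vL then p vL / x vL
      else if \<exists>w\<in>supp D. s \<le> x w then Inf {w \<in> supp D. s \<le> x w} else 0)"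

lemma bdd_below_allocation_reaches: "bdd_below {w \<in> supp D. s \<le> x w}"
  using supp_atLeast by (intro bdd_belowI[of _ vL]) auto

lemma initial_price_bounds: "0 \<le> p vL / x vL" "p vL / x vL \<le> vL"
proof -
  show "0 \<le> p vL / x vL"
    using payment_nonneg[OF vL_in_supp] allocation_bounds[OF vL_in_supp] by simp
  show "p vL / x vL \<le> vL"
    using individually_rational[OF vL_in_supp] allocation_bounds[OF vL_in_supp] vL_nonneg
    by (cases "x vL = 0") (simp_all add: divide_le_eq mult.commute)
qed

lemma threshold_price_eq_Inf:
  "w \<in> supp D \<Longrightarrow> s \<le> x w \<Longrightarrow> \<not> s \<le> x vL \<Longrightarrow> threshold_price s = Inf {w \<in> supp D. s \<le> x w}"
  unfolding threshold_price_def by auto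

lemma threshold_price_bounds:
  assumes "u \<in> supp D" "w \<in> supp D" "x u < s" "s \<le> x w"
  shows "u \<le> threshold_price s" "threshold_price s \<le> w"
proof -
  have "x vL \<le> x u"
    using allocation_mono[OF vL_in_supp assms(1)] supp_atLeast assms(1) by auto
  then have price: "threshold_price s = Inf {w \<in> supp D. s \<le> x w}"
    using threshold_price_eq_Inf[OF assms(2,4)] assms(3) by simp
  show "threshold_price s \<le> w"
    unfolding price using assms(2,4) by (intro cInf_lower bdd_below_allocation_reaches) auto
  show "u \<le> threshold_price s"
    unfolding price
  proof (rule cInf_greatest)
    show "{w \<in> supp D. s \<le> x w} \<noteq> {}"
      using assms(2,4) by auto
    show "u \<le> w'" if "w' \<in> {w \<in> supp D. s \<le> x w}" for w'
      using that assms(1,3) allocation_mono[of w' u] by force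
  qed
qed

lemma threshold_price_nonneg: "0 \<le> threshold_price s"
proof -
  have "vL \<le> Inf {w \<in> supp D. s \<le> x w}" if "w \<in> supp D" "s \<le> x w" for w
    using that supp_atLeast by (intro cInf_greatest) auto
  then show ?thesis
    using initial_price_bounds(1) vL_nonneg unfolding threshold_price_def by force
qed

lemma threshold_price_le:
  assumes "v \<in> supp D" "s \<le> x v"
  shows "threshold_price s \<le> v"
proof (cases "s \<le> x vL")
  case True
  then show ?thesis
    using initial_price_bounds(2) supp_atLeast assms(1) by (auto simp: threshold_price_def)
next
  case False
  then show ?thesis
    using threshold_price_bounds(2)[OF vL_in_supp assms(1) _ assms(2)] by simp
qed

lemma threshold_price_mono_on: "mono_on {s. \<exists>w\<in>supp D. s \<le> x w} threshold_price"
proof (rule mono_onI)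
  fix s s' assume s: "s \<in> {s. \<exists>w\<in>supp D. s \<le> x w}" "s' \<in> {s. \<exists>w\<in>supp D. s \<le> x w}" "s \<le> s'"
  then obtain w' where w': "w' \<in> supp D" "s' \<le> x w'"
    by auto
  show "threshold_price s \<le> threshold_price s'"
  proof (cases "s' \<le> x vL")
    case True
    then show ?thesis
      using s(3) by (simp add: threshold_price_def)
  next
    case False
    show ?thesis
    proof (cases "s \<le> x vL")
      case True
      then have "threshold_price s = p vL / x vL"
        by (simp add: threshold_price_def)
      moreover have "vL \<le> threshold_price s'"
        using threshold_price_bounds(1)[OF vL_in_supp w'(1)] \<open>\<not> s' \<le> x vL\<close> w'(2) by simp
      ultimately show ?thesis
        using initial_price_bounds(2) by linarith
    next
      case False
      have "Inf {w \<in> supp D. s \<le> x w} \<le> Inf {w \<in> supp D. s' \<le> x w}"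
        using w' s(3) by (intro cInf_superset_mono bdd_below_allocation_reaches) auto
      then show ?thesis
        using False \<open>\<not> s' \<le> x vL\<close> s(1,2) by (auto simp: threshold_price_def)
    qed
  qed
qed

lemma threshold_price_measurable [measurable]: "threshold_price \<in> borel_measurable borel"
proof -
  let ?W = "{s. \<exists>w\<in>supp D. s \<le> x w}"
  have "is_interval ?W"
    unfolding is_interval_1 by (auto intro: order_trans)
  then have "?W \<in> sets borel"
    by (rule real_interval_borel_measurable)
  moreover have "mono_on (- ?W) threshold_price"
    using vL_in_supp by (intro mono_onI) (auto simp: threshold_price_def)
  ultimately show ?thesis
    using threshold_price_mono_on by (intro borel_measurable_piecewise_mono[of "{?W, - ?W}"]) auto
qed

lemma threshold_price_integrable: "v \<in> supp D \<Longrightarrow> threshold_price integrable_on {0..x v}"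
  by (intro integrable_on_mono_on mono_on_subset[OF threshold_price_mono_on]) auto

lemma integral_threshold_price_increment_bounds:
  assumes "vL \<le> u" "u \<le> w" "w \<in> supp D"
  shows "u * (x w - x u) \<le> integral {0..x w} threshold_price - integral {0..x u} threshold_price \<and>
    integral {0..x w} threshold_price - integral {0..x u} threshold_price \<le> w * (x w - x u)"
proof -
  have u: "u \<in> supp D"
    using in_supp_if_between assms by blast
  have xu: "0 \<le> x u" "x u \<le> x w"
    using allocation_bounds[OF u] allocation_mono[OF u assms(3,2)] by auto
  let ?I = "\<lambda>f. integral {x u<..<x w} f"
  have "integral {0..x w} threshold_price - integral {0..x u} threshold_price =
      integral {x u..x w} threshold_price"
    using Henstock_Kurzweil_Integration.integral_combine[OF xu threshold_price_integrable[OF assms(3)]]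
    by simp
  also have "\<dots> = ?I threshold_price"
    by (simp add: integral_open_interval_real)
  finally have diff: "integral {0..x w} threshold_price - integral {0..x u} threshold_price = ?I threshold_price" .
  have "threshold_price integrable_on {x u..x w}"
    using integrable_on_subinterval[OF threshold_price_integrable[OF assms(3)]] xu by auto
  then have int: "threshold_price integrable_on {x u<..<x w}"
    by (simp add: integrable_on_open_interval_real)
  have const: "?I (\<lambda>_. c) = c * (x w - x u)" for c
    using xu by (simp add: integral_open_interval_real[symmetric] content_real mult.commute)
  have "?I (\<lambda>_. u) \<le> ?I threshold_price" "?I threshold_price \<le> ?I (\<lambda>_. w)"
    using threshold_price_bounds[OF u assms(3)] int
    by (auto intro!: integral_le simp: integrable_on_open_interval_real)
  then show ?thesis
    unfolding diff const by simp
qed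

lemma payment_eq_integral:
  assumes "v \<in> supp D"
  shows "p v = integral {0..x v} threshold_price"
proof -
  let ?h = "\<lambda>v. p v - integral {0..x v} threshold_price"
  have "vL \<le> v"
    using assms supp_atLeast by auto
  then have "?h v = ?h vL"
  proof (rule eq_if_increments_bounded[where X = x])
    fix u w assume uw: "vL \<le> u" "u \<le> w" "w \<le> v"
    then have "u \<in> supp D" "w \<in> supp D"
      using in_supp_if_between[OF assms] by auto
    then show "\<bar>?h w - ?h u\<bar> \<le> (w - u) * (x w - x u)"
      using payment_increment_bounds[of u w] integral_threshold_price_increment_bounds[OF uw(1,2)]
      by (auto simp: abs_le_iff left_diff_distrib)
  qed
  moreover have "integral {0..x vL} threshold_price = integral {0..x vL} (\<lambda>_. p vL / x vL)"
    by (intro integral_cong) (simp add: threshold_price_def)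
  moreover have "x vL * (p vL / x vL) = p vL"
    using individually_rational[OF vL_in_supp] payment_nonneg[OF vL_in_supp]
    by (cases "x vL = 0") simp_all
  ultimately show ?thesis
    using allocation_bounds[OF vL_in_supp] by simp
qed

lemma threshold_price_has_integral:
  "v \<in> supp D \<Longrightarrow> (threshold_price has_integral p v) {0..x v}"
  using payment_eq_integral threshold_price_integrable by (simp add: has_integral_integral)

lemma payment_eq_nn_integral:
  "v \<in> supp D \<Longrightarrow> ennreal (p v) = (\<integral>\<^sup>+ s. ennreal (threshold_price s) * indicator {0..x v} s \<partial>lborel)"
  using nn_integral_has_integral_lebesgue'[OF threshold_price_nonneg threshold_price_has_integral] by simp

lemma utility_eq_nn_integral:
  assumes "v \<in> supp D"
  shows "ennreal (x v * v - p v) = (\<integral>\<^sup>+ s. ennreal (v - threshold_price s) * indicator {0..x v} s \<partial>lborel)"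
proof -
  have "((\<lambda>s. v - threshold_price s) has_integral (x v * v - p v)) {0..x v}"
    using has_integral_diff[OF has_integral_const_real threshold_price_has_integral[OF assms]]
      allocation_bounds[OF assms] by simp
  then show ?thesis
    using threshold_price_le[OF assms] by (subst nn_integral_has_integral_lebesgue') auto
qed

lemma supp_borel [measurable]: "supp D \<in> sets borel"
  using supp_interval by (rule real_interval_borel_measurable)

lemma nn_integral_threshold_price_le:
  fixes h :: "real \<Rightarrow> real \<Rightarrow> ennreal"
  assumes [measurable]: "case_prod h \<in> borel_measurable (borel \<Otimes>\<^sub>M borel)"
  shows "(\<integral>\<^sup>+ v. (\<integral>\<^sup>+ s. h (threshold_price s) v * indicator {0..x v} s \<partial>lborel) \<partial>D) \<le>
    (\<integral>\<^sup>+ s. indicator {0..1} s * (\<integral>\<^sup>+ v. indicator {threshold_price s..} v * h (threshold_price s) v \<partial>D) \<partial>lborel)"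
proof -
  let ?F = "\<lambda>v s. indicator (supp D) v * (h (threshold_price s) v * indicator {0..x v} s)"
  have [measurable]: "Measurable.pred (borel \<Otimes>\<^sub>M borel) (\<lambda>z. snd z \<in> {0..x (fst z)})"
    unfolding atLeastAtMost_iff by measurable
  have "pair_sigma_finite D lborel"
    by (simp add: pair_sigma_finite_def sigma_finite_lborel prob_space_imp_sigma_finite prob_space_axioms)
  have "(\<integral>\<^sup>+ v. (\<integral>\<^sup>+ s. h (threshold_price s) v * indicator {0..x v} s \<partial>lborel) \<partial>D) =
      (\<integral>\<^sup>+ v. (\<integral>\<^sup>+ s. ?F v s \<partial>lborel) \<partial>D)"
    using AE_in_supp by (intro nn_integral_cong_AE) (auto elim!: eventually_mono)
  also have "\<dots> = (\<integral>\<^sup>+ s. (\<integral>\<^sup>+ v. ?F v s \<partial>D) \<partial>lborel)"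
    by (rule pair_sigma_finite.Fubini'[OF \<open>pair_sigma_finite D lborel\<close>, symmetric]) measurable
  also have "\<dots> \<le> (\<integral>\<^sup>+ s. (\<integral>\<^sup>+ v. indicator {0..1} s * (indicator {threshold_price s..} v * h (threshold_price s) v) \<partial>D) \<partial>lborel)"
  proof (intro nn_integral_mono)
    fix s v
    show "?F v s \<le> indicator {0..1} s * (indicator {threshold_price s..} v * h (threshold_price s) v)"
      using allocation_bounds[of v] threshold_price_le[of v s] by (auto simp: indicator_def)
  qed
  also have "\<dots> = (\<integral>\<^sup>+ s. indicator {0..1} s * (\<integral>\<^sup>+ v. indicator {threshold_price s..} v * h (threshold_price s) v \<partial>D) \<partial>lborel)"
    by (simp add: nn_integral_cmult)
  finally show ?thesis .
qed

lemma revenue_le_random_posted_price: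
  "revenue D (x, p) \<le> (\<integral>\<^sup>+ s. indicator {0..1} s * revenue D (posted_price (threshold_price s)) \<partial>lborel)"
proof -
  have "revenue D (x, p) = (\<integral>\<^sup>+ v. (\<integral>\<^sup>+ s. ennreal (threshold_price s) * indicator {0..x v} s \<partial>lborel) \<partial>D)"
    unfolding revenue_def using AE_in_supp
    by (intro nn_integral_cong_AE) (auto elim!: eventually_mono simp: payment_eq_nn_integral)
  also have "\<dots> \<le> (\<integral>\<^sup>+ s. indicator {0..1} s * revenue D (posted_price (threshold_price s)) \<partial>lborel)"
    unfolding revenue_posted_price by (rule nn_integral_threshold_price_le[where h = "\<lambda>t v. ennreal t"]) measurable
  finally show ?thesis .
qed

lemma surplus_le_random_posted_price:
  "surplus D (x, p) \<le> (\<integral>\<^sup>+ s. indicator {0..1} s * surplus D (posted_price (threshold_price s)) \<partial>lborel)"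
proof -
  have "surplus D (x, p) = (\<integral>\<^sup>+ v. (\<integral>\<^sup>+ s. ennreal (v - threshold_price s) * indicator {0..x v} s \<partial>lborel) \<partial>D)"
    unfolding surplus_def using AE_in_supp
    by (intro nn_integral_cong_AE) (auto elim!: eventually_mono simp: utility_eq_nn_integral)
  also have "\<dots> \<le> (\<integral>\<^sup>+ s. indicator {0..1} s * surplus D (posted_price (threshold_price s)) \<partial>lborel)"
    unfolding surplus_posted_price by (rule nn_integral_threshold_price_le[where h = "\<lambda>t v. ennreal (v - t)"]) measurable
  finally show ?thesis .
qed

lemma dominated_by_random_price_below:
  assumes "0 \<le> r" and r_max: "\<And>t. 0 \<le> t \<Longrightarrow> revenue D (posted_price t) \<le> revenue D (posted_price r)"
  shows "revenue D (x, p) \<le>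
      (\<integral>\<^sup>+ s. indicator {0..1} s * revenue D (posted_price (min (threshold_price s) r)) \<partial>lborel)"
    and "surplus D (x, p) \<le>
      (\<integral>\<^sup>+ s. indicator {0..1} s * surplus D (posted_price (min (threshold_price s) r)) \<partial>lborel)"
proof -
  have "revenue D (posted_price t) \<le> revenue D (posted_price (min t r))" if "0 \<le> t" for t
    using r_max[OF that] by (cases "t \<le> r") (auto simp: min_def)
  then show "revenue D (x, p) \<le>
      (\<integral>\<^sup>+ s. indicator {0..1} s * revenue D (posted_price (min (threshold_price s) r)) \<partial>lborel)"
    using threshold_price_nonneg
    by (intro order_trans[OF revenue_le_random_posted_price] nn_integral_mono mult_left_mono) auto
  show "surplus D (x, p) \<le>
      (\<integral>\<^sup>+ s. indicator {0..1} s * surplus D (posted_price (min (threshold_price s) r)) \<partial>lborel)"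
    by (intro order_trans[OF surplus_le_random_posted_price] nn_integral_mono mult_left_mono
        surplus_posted_price_antimono) auto
qed

end

theorem proposition3p1:
  fixes D :: "real measure" and M :: mech
  assumes "standing_assumptions D"
    and "pareto_optimal D M"
  shows "\<exists>lam p1 p2. 0 \<le> lam \<and> lam \<le> 1 \<and>
           0 \<le> p1 \<and> p1 \<le> lowest_monopoly_reserve D \<and>
           0 \<le> p2 \<and> p2 \<le> lowest_monopoly_reserve D \<and>
           lottery_pricing lam p1 p2 \<in> mechs D \<and>
           revenue D (lottery_pricing lam p1 p2) = revenue D M \<and>
           surplus D (lottery_pricing lam p1 p2) = surplus D M"
proof -
  interpret real_distribution D
    using assms(1) by (rule real_distribution_if_standing_assumptions)
  obtain vL where vL: "0 \<le> vL" "vL \<in> supp D" "supp D \<subseteq> {vL..}" "is_interval (supp D)"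
    using assms(1) by (rule supp_interval_if_standing_assumptions)
  have nonneg: "AE v in D. 0 \<le> v"
    using AE_in_supp by eventually_elim (use vL in auto)
  define r where "r = lowest_monopoly_reserve D"
  have r: "0 \<le> r" "\<And>t. 0 \<le> t \<Longrightarrow> revenue D (posted_price t) \<le> revenue D (posted_price r)"
    using lowest_monopoly_reserve_posted_price_optimal[OF nonneg] assms(1)
    unfolding r_def standing_assumptions_def by blast+
  obtain x p where M: "M = (x, p)"
    by fastforce
  interpret ic_mechanism D x p vL
    using assms(2) vL unfolding M pareto_optimal_def by unfold_locales auto
  have "\<exists>lam t1 t2. lam \<in> {0..1} \<and> t1 \<in> {0..r} \<and> t2 \<in> {0..r} \<and>
      revenue D (lottery_pricing lam t1 t2) = revenue D M \<and> surplus D (lottery_pricing lam t1 t2) = surplus D M"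
    using dominated_by_random_price_below[OF r] threshold_price_nonneg r(1) unfolding M
    by (intro two_price_lottery_if_dominated_by_random_price[OF nonneg assms(2)[unfolded M] r]) auto
  then show ?thesis
    unfolding r_def by (auto intro: lottery_pricing_in_mechs)
qed

end
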